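(* Let $\mathcal{X}_V,\mathcal{X}_L$ be finite sets, $\mathcal{P}_M$ a joint distribution on $\mathcal{X}_V\times\mathcal{X}_L$ with everywhere positive marginals $\mathcal{P}_V,\mathcal{P}_L$, and let each sample $x$ have a ground-truth label $y(x)$. Let $\alpha=\mathbb{E}_{(x_v,x_l)\sim\mathcal{P}_M}\mathbb{1}[y(x_v)\ne y(x_l)]$, let $\mathcal{P}_T(x_v,x_v')=\mathbb{E}_{x_l\sim\mathcal{P}_L}\mathcal{P}_M(x_v|x_l)\mathcal{P}_M(x_v'|x_l)$ with $\mathcal{P}_M(x_v|x_l)=\mathcal{P}_M(x_v,x_l)/\mathcal{P}_L(x_l)$, and define $\alpha_T=\sum_{x_v,x_v'\in\mathcal{X}_V}\mathcal{P}_T(x_v,x_v')\,\mathbb{1}[y(x_v)\ne y(x_v')]$. Then $\alpha\ge\frac12\alpha_T$. *)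

theory Defs
  imports Main "HOL-Library.Indicator_Function"
begin

definition is_joint_dist :: "('v::finite \<Rightarrow> 'l::finite \<Rightarrow> real) \<Rightarrow> bool" where
  "is_joint_dist PM \<longleftrightarrow> (\<forall>v l. PM v l \<ge> 0) \<and> (\<Sum>v\<in>UNIV. \<Sum>l\<in>UNIV. PM v l) = 1"

definition marg_V :: "('v \<Rightarrow> 'l::finite \<Rightarrow> real) \<Rightarrow> 'v \<Rightarrow> real" where
  "marg_V PM v = (\<Sum>l\<in>UNIV. PM v l)"

definition marg_L :: "('v::finite \<Rightarrow> 'l \<Rightarrow> real) \<Rightarrow> 'l \<Rightarrow> real" where
  "marg_L PM l = (\<Sum>v\<in>UNIV. PM v l)"

definition cond_V :: "('v::finite \<Rightarrow> 'l \<Rightarrow> real) \<Rightarrow> 'v \<Rightarrow> 'l \<Rightarrow> real" where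
  "cond_V PM v l = PM v l / marg_L PM l"

definition alpha :: "('v::finite \<Rightarrow> 'l::finite \<Rightarrow> real) \<Rightarrow> ('v \<Rightarrow> 'c) \<Rightarrow> ('l \<Rightarrow> 'c) \<Rightarrow> real" where
  "alpha PM yV yL = (\<Sum>v\<in>UNIV. \<Sum>l\<in>UNIV. PM v l * (if yV v \<noteq> yL l then 1 else 0))"

definition P_T :: "('v::finite \<Rightarrow> 'l::finite \<Rightarrow> real) \<Rightarrow> 'v \<Rightarrow> 'v \<Rightarrow> real" where
  "P_T PM v v' = (\<Sum>l\<in>UNIV. marg_L PM l * (cond_V PM v l * cond_V PM v' l))"

definition alpha_T :: "('v::finite \<Rightarrow> 'l::finite \<Rightarrow> real) \<Rightarrow> ('v \<Rightarrow> 'c) \<Rightarrow> real" where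
  "alpha_T PM yV = (\<Sum>v\<in>UNIV. \<Sum>v'\<in>UNIV. P_T PM v v' * (if yV v \<noteq> yV v' then 1 else 0))"

end

theory Submission
  imports Defs
begin

text \<open>
  Conditionally on the language sample \<open>x\<^sub>l\<close>, two independent vision samples can only
  disagree in label if at least one of them disagrees with \<open>y(x\<^sub>l)\<close>; by the union bound
  the conditional disagreement rate of the pair is at most twice the conditional
  vision/language disagreement rate. Averaging over \<open>x\<^sub>l\<close> gives \<open>\<alpha>\<^sub>T \<le> 2\<alpha>\<close>.
\<close>

lemma weighted_pair_disagreement_le:
  fixes w :: "'a \<Rightarrow> real" and f :: "'a \<Rightarrow> 'c"
  assumes "finite A" and nonneg: "\<And>x. x \<in> A \<Longrightarrow> w x \<ge> 0"
  shows "(\<Sum>x\<in>A. \<Sum>x'\<in>A. w x * w x' * (if f x \<noteq> f x' then 1 else 0))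
    \<le> 2 * sum w A * (\<Sum>x\<in>A. w x * (if f x \<noteq> c then 1 else 0))"
proof -
  define d where "d x = w x * (if f x \<noteq> c then 1 else 0)" for x
  have "(\<Sum>x\<in>A. \<Sum>x'\<in>A. w x * w x' * (if f x \<noteq> f x' then 1 else 0))
    \<le> (\<Sum>x\<in>A. \<Sum>x'\<in>A. w x * w x' * ((if f x \<noteq> c then 1 else 0) + (if f x' \<noteq> c then 1 else 0)))"
    by (intro sum_mono mult_left_mono) (auto simp: nonneg)
  also have "\<dots> = (\<Sum>x\<in>A. \<Sum>x'\<in>A. w x' * d x) + (\<Sum>x\<in>A. \<Sum>x'\<in>A. w x * d x')"
    by (simp add: d_def algebra_simps sum.distrib)
  also have "\<dots> = 2 * sum w A * sum d A"
  proof -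
    have "(\<Sum>x\<in>A. \<Sum>x'\<in>A. w x' * d x) = sum w A * sum d A"
      by (simp add: sum_product mult.commute)
    moreover have "(\<Sum>x\<in>A. \<Sum>x'\<in>A. w x * d x') = sum w A * sum d A"
      by (simp add: sum_product)
    ultimately show ?thesis
      by simp
  qed
  finally show ?thesis
    by (simp add: d_def)
qed

lemma alpha_eq_sum_over_L:
  "alpha PM yV yL = (\<Sum>l\<in>UNIV. \<Sum>v\<in>UNIV. PM v l * (if yV v \<noteq> yL l then 1 else 0))"
  unfolding alpha_def by (rule sum.swap)

lemma alpha_T_eq_sum_over_L:
  "alpha_T PM yV = (\<Sum>l\<in>UNIV.
     (\<Sum>v\<in>UNIV. \<Sum>v'\<in>UNIV. PM v l * PM v' l * (if yV v \<noteq> yV v' then 1 else 0)) / marg_L PM l)"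
proof -
  \<comment> \<open>Valid even where \<open>marg_L PM l = 0\<close>, since then both sides are \<open>0\<close> (\<open>x / 0 = 0\<close>).\<close>
  have "marg_L PM l * (cond_V PM v l * cond_V PM v' l) = PM v l * PM v' l / marg_L PM l"
    for v v' l
    by (cases "marg_L PM l = 0") (simp_all add: cond_V_def power2_eq_square)
  then have "alpha_T PM yV = (\<Sum>v\<in>UNIV. \<Sum>v'\<in>UNIV. \<Sum>l\<in>UNIV.
      PM v l * PM v' l * (if yV v \<noteq> yV v' then 1 else 0) / marg_L PM l)"
    unfolding alpha_T_def P_T_def sum_distrib_right by simp
  also have "\<dots> = (\<Sum>l\<in>UNIV. \<Sum>v\<in>UNIV. \<Sum>v'\<in>UNIV.
      PM v l * PM v' l * (if yV v \<noteq> yV v' then 1 else 0) / marg_L PM l)"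
    by (subst sum.swap) (subst (2) sum.swap, rule refl)
  finally show ?thesis
    by (simp add: sum_divide_distrib)
qed

theorem propositionA1:
  fixes PM :: "'v::finite \<Rightarrow> 'l::finite \<Rightarrow> real"
    and yV :: "'v \<Rightarrow> 'c" and yL :: "'l \<Rightarrow> 'c"
  assumes "is_joint_dist PM"
    and "\<And>v. marg_V PM v > 0"
    and "\<And>l. marg_L PM l > 0"
  shows "alpha PM yV yL \<ge> alpha_T PM yV / 2"
proof -
  have nonneg: "PM v l \<ge> 0" for v l
    using assms(1) by (simp add: is_joint_dist_def)
  have "(\<Sum>v\<in>UNIV. \<Sum>v'\<in>UNIV. PM v l * PM v' l * (if yV v \<noteq> yV v' then 1 else 0)) / marg_L PM l
    \<le> 2 * (\<Sum>v\<in>UNIV. PM v l * (if yV v \<noteq> yL l then 1 else 0))" for l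
    using weighted_pair_disagreement_le[of UNIV "\<lambda>v. PM v l" yV "yL l"] nonneg assms(3)[of l]
    by (simp add: divide_le_eq marg_L_def mult_ac)
  then have "alpha_T PM yV \<le> 2 * alpha PM yV yL"
    unfolding alpha_T_eq_sum_over_L alpha_eq_sum_over_L sum_distrib_left by (rule sum_mono)
  then show ?thesis
    by simp
qed

end
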